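(* Let $x,y$ be non-commuting indeterminates and $C=xyx^{-1}y^{-1}$. Let $(R_n)_{n\in\mathbb Z}$ be the solution of $$R_{n+1}CR_{n-1}=R_n^2+1\qquad(n\in\mathbb Z)$$ with $R_0=yxy^{-1}$ and $R_1=y$. Then the element $$K_n:=R_{n+1}^{-1}R_n+R_{n+1}^{-1}R_n^{-1}+R_{n+1}R_n^{-1}$$ is independent of $n\in\mathbb Z$.
   Context: Work in the free skew field (non-commutative rational functions) over $\mathbb C$ generated by $x,y$. *)

theory Defs
  imports Main
begin

definition commC :: "'a::division_ring \<Rightarrow> 'a \<Rightarrow> 'a" where
  "commC x y = x * y * inverse x * inverse y"

definition Kinv :: "(int \<Rightarrow> 'a::division_ring) \<Rightarrow> int \<Rightarrow> 'a" where
  "Kinv R n = inverse (R (n+1)) * R n + inverse (R (n+1)) * inverse (R n)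
             + R (n+1) * inverse (R n)"

end

theory Submission
  imports Defs
begin

text \<open>
  Write \<open>C\<close> for \<open>commC x y\<close>. The key observation is the quasi-commutation
  \<open>R n * C * R (n - 1) = R (n - 1) * R n\<close>: it holds for \<open>n = 1\<close> by direct
  computation, and together with the recurrence at \<open>n\<close> it propagates from \<open>n\<close> to
  \<open>n + 1\<close> and back, hence holds for all \<open>n\<close>. Given it, multiplying \<open>K n\<close> and
  \<open>K (n - 1)\<close> on the right by \<open>R n\<close> turns both into \<open>C * R (n - 1) + R (n + 1)\<close>.
\<close>

lemma mult_inverse_cancel_left [simp]:
  "(b::'a::division_ring) \<noteq> 0 \<Longrightarrow> b * (inverse b * z) = z"
  by (simp add: mult.assoc [symmetric])

lemma inverse_mult_cancel_left [simp]:
  "(b::'a::division_ring) \<noteq> 0 \<Longrightarrow> inverse b * (b * z) = z"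
  by (simp add: mult.assoc [symmetric])

text \<open>In the following lemmas \<open>a, b, c\<close> stand for \<open>R (n - 1), R n, R (n + 1)\<close>.\<close>

lemma quasi_commute_forward:
  fixes a b c C :: "'a::division_ring"
  assumes "C * a \<noteq> 0" and rec: "c * C * a = b * b + 1" and qc: "b * C * a = a * b"
  shows "c * C * b = b * c"
proof -
  have "b * c * (C * a) = b * (b * b + 1)"
    using rec by (simp add: mult.assoc)
  also have "\<dots> = (b * b + 1) * b"
    by (simp add: algebra_simps)
  also have "\<dots> = c * C * a * b"
    using rec by simp
  also have "\<dots> = c * C * (b * C * a)"
    using qc by (simp add: mult.assoc)
  finally have "b * c * (C * a) = c * C * b * (C * a)"
    by (simp add: mult.assoc)
  then show ?thesis
    using \<open>C * a \<noteq> 0\<close> by simp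
qed

lemma quasi_commute_backward:
  fixes a b c C :: "'a::division_ring"
  assumes "c * C \<noteq> 0" and rec: "c * C * a = b * b + 1" and qc: "c * C * b = b * c"
  shows "b * C * a = a * b"
proof -
  have "c * C * (b * C * a) = c * C * b * (C * a)"
    by (simp add: mult.assoc)
  also have "\<dots> = b * (c * C * a)"
    using qc by (simp add: mult.assoc)
  also have "\<dots> = (b * b + 1) * b"
    using rec by (simp add: algebra_simps)
  also have "\<dots> = c * C * (a * b)"
    using rec by (metis mult.assoc)
  finally show ?thesis
    using \<open>c * C \<noteq> 0\<close> by simp
qed

lemma Kinv_terms_eq:
  fixes a b c C :: "'a::division_ring"
  assumes nz: "a \<noteq> 0" "b \<noteq> 0" "c \<noteq> 0" "C \<noteq> 0"
    and rec: "c * C * a = b * b + 1" and qc: "b * C * a = a * b"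
  shows "inverse c * b + inverse c * inverse b + c * inverse b
       = inverse b * a + inverse b * inverse a + b * inverse a"
proof -
  have Ca: "C * a = inverse b * a * b"
  proof -
    have "C * a = inverse b * (b * C * a)"
      using nz by (simp add: mult.assoc)
    then show ?thesis
      using qc by (simp add: mult.assoc)
  qed
  have c: "c = (b * b + 1) * inverse (C * a)"
    using nz by (simp flip: rec add: mult.assoc nonzero_inverse_mult_distrib)
  have "(inverse c * b + inverse c * inverse b + c * inverse b) * b
      = inverse c * (b * b + 1) + c"
    using nz by (simp add: algebra_simps)
  also have "\<dots> = inverse b * a * b + (b * b + 1) * (inverse b * inverse a * b)"
    using rec c Ca nz by (simp add: mult.assoc nonzero_inverse_mult_distrib)
  also have "\<dots> = (inverse b * a + inverse b * inverse a + b * inverse a) * b"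
    using nz by (simp add: algebra_simps)
  finally show ?thesis
    using nz by (metis mult_cancel_right)
qed

lemma int_fun_const_if_step:
  fixes f :: "int \<Rightarrow> 'b"
  assumes "\<And>n. f n = f (n - 1)"
  shows "f n = f m"
proof -
  have "f n = f 0" for n
  proof (induction n rule: int_induct [where k = 0])
    case (step1 i)
    then show ?case using assms [of "i + 1"] by simp
  next
    case (step2 i)
    then show ?case using assms [of i] by simp
  qed simp
  then show ?thesis by metis
qed

locale twisted_recurrence =
  fixes C :: "'a::division_ring" and R :: "int \<Rightarrow> 'a"
  assumes C_nonzero: "C \<noteq> 0"
    and R_nonzero: "\<And>n. R n \<noteq> 0"
    and recurrence: "\<And>n. R (n + 1) * C * R (n - 1) = R n * R n + 1"
begin

lemma quasi_commute_all:
  assumes "R k * C * R (k - 1) = R (k - 1) * R k"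
  shows "R n * C * R (n - 1) = R (n - 1) * R n"
proof (induction n rule: int_induct [where k = k])
  case base
  show ?case by (fact assms)
next
  case (step1 i)
  have "R (i + 1) * C * R i = R i * R (i + 1)"
    using quasi_commute_forward [of C "R (i - 1)" "R (i + 1)" "R i"]
      C_nonzero R_nonzero recurrence step1(2) by simp
  then show ?case by simp
next
  case (step2 i)
  have "R (i - 1) * C * R (i - 1 - 1) = R (i - 1 - 1) * R (i - 1)"
    using quasi_commute_backward [of "R i" C "R (i - 1 - 1)" "R (i - 1)"]
      C_nonzero R_nonzero recurrence [of "i - 1"] step2(2) by simp
  then show ?case by simp
qed

lemma Kinv_const:
  assumes "R k * C * R (k - 1) = R (k - 1) * R k"
  shows "Kinv R n = Kinv R m"
proof (rule int_fun_const_if_step)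
  fix n
  show "Kinv R n = Kinv R (n - 1)"
    using Kinv_terms_eq [OF R_nonzero R_nonzero R_nonzero C_nonzero recurrence [of n]
        quasi_commute_all [OF assms, of n]]
    by (simp add: Kinv_def)
qed

end

theorem lemma3p1:
  fixes x y :: "'a::{division_ring, ring_char_0}" and R :: "int \<Rightarrow> 'a"
  assumes "x \<noteq> 0" and "y \<noteq> 0"
    and "\<forall>n. R n \<noteq> 0"
    and "\<forall>n. R (n+1) * commC x y * R (n-1) = R n ^ 2 + 1"
    and "R 0 = y * x * inverse y" and "R 1 = y"
  shows "\<forall>n m. Kinv R n = Kinv R m"
proof -
  interpret twisted_recurrence "commC x y" R
    using assms(1-4) by unfold_locales (simp_all add: commC_def power2_eq_square)
  have "R 1 * commC x y * R (1 - 1) = R (1 - 1) * R 1"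
    using assms(1,2,5,6) by (simp add: commC_def mult.assoc)
  then show ?thesis
    using Kinv_const by blast
qed

end
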